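(* Let $p$ be a prime and let $a,b$ be integers, both coprime to $p$, with $a\neq 1$. For each $n\geq 1$, let $x_n$ denote the smallest positive integer satisfying $a^{x_n}\equiv b \pmod{p^n}$, when one exists. If $x_n$ exists for every $n\geq 1$, then the sequence $(x_n)_{n\geq 1}$ converges in the ring $\mathbb{Z}_p$ of $p$-adic integers, that is, with respect to the $p$-adic absolute value.
   Context: $\mathbb{Z}_p$ denotes the ring of $p$-adic integers, i.e. the completion of $\mathbb{Z}$ with respect to the $p$-adic metric $d(x,y)=e^{-v_p(x-y)}$. Here $v_p$ is the $p$-adic valuation. *)

theory Defs
  imports "HOL-Number_Theory.Number_Theory"
begin

definition min_exp :: "int \<Rightarrow> int \<Rightarrow> nat \<Rightarrow> nat \<Rightarrow> nat" where
  "min_exp a b p n = (LEAST x::nat. 0 < x \<and> [a ^ x = b] (mod (int p ^ n)))"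

text \<open>Convergence in Z_p of an integer sequence: since Z_p is the completion of Z
  for the p-adic metric, a sequence of integers converges in Z_p iff it is Cauchy
  for that metric, i.e. for every k, eventually all terms agree modulo p^k.\<close>
definition padic_convergent :: "nat \<Rightarrow> (nat \<Rightarrow> int) \<Rightarrow> bool" where
  "padic_convergent p x \<longleftrightarrow>
     (\<forall>k::nat. \<exists>N. \<forall>m\<ge>N. \<forall>n\<ge>N. (int p ^ k) dvd (x m - x n))"

end

theory Submission imports Defs begin

text \<open>Write \<open>x\<^sub>n\<close> for the least exponent. For \<open>m \<ge> n\<close> both \<open>a ^ x\<^sub>m\<close> and
  \<open>a ^ x\<^sub>n\<close> are \<open>b\<close> modulo \<open>p ^ n\<close>, so \<open>x\<^sub>m - x\<^sub>n\<close> is a multiple of the order of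
  \<open>a\<close> modulo \<open>p ^ n\<close>. For \<open>a \<noteq> \<plusminus>1\<close> the \<open>p\<close>-part of this order is unbounded in
  \<open>n\<close>: the order divides \<open>\<phi>(p ^ n) = p ^ (n - 1) * (p - 1)\<close>, so if \<open>p ^ k\<close> does
  not divide it, it divides \<open>M = p ^ (k - 1) * (p - 1)\<close>, and then \<open>p ^ n\<close> divides the
  nonzero integer \<open>a ^ M - 1\<close>, which fails for large \<open>n\<close>. For \<open>a = -1\<close> every \<open>x\<^sub>n\<close>
  is \<open>1\<close> or \<open>2\<close>, and these are told apart modulo \<open>p ^ 2 > 2\<close>, so the sequence is
  eventually constant.\<close>

lemma pow_gcd_cong_one:
  fixes a m :: int
  assumes "[a ^ d = 1] (mod m)" "[a ^ e = 1] (mod m)"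
  shows "[a ^ gcd d e = 1] (mod m)"
proof (cases "d = 0")
  case True
  then show ?thesis using assms by simp
next
  case False
  then obtain x y where xy: "d * x = e * y + gcd d e" using bezout_nat by blast
  have "[1 * a ^ gcd d e = (a ^ e) ^ y * a ^ gcd d e] (mod m)"
    using cong_sym[OF cong_pow[OF assms(2), of y]] by (intro cong_mult) auto
  then have "[a ^ gcd d e = (a ^ e) ^ y * a ^ gcd d e] (mod m)" by simp
  also have "(a ^ e) ^ y * a ^ gcd d e = a ^ (d * x)"
    by (simp add: xy power_add power_mult)
  also have "[a ^ (d * x) = 1] (mod m)"
    using cong_pow[OF assms(1), of x] by (simp add: power_mult)
  finally show ?thesis .
qed

lemma pow_diff_cong_one:
  fixes a m :: int
  assumes "coprime a m" "[a ^ i = a ^ j] (mod m)" "i \<le> j"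
  shows "[a ^ (j - i) = 1] (mod m)"
proof -
  have "[a ^ i * a ^ (j - i) = a ^ i * 1] (mod m)"
    using assms(2,3) by (simp add: cong_sym flip: power_add)
  moreover have "coprime (a ^ i) m" using assms(1) by simp
  ultimately show ?thesis using cong_mult_lcancel by blast
qed

lemma dvd_exp_diff_if_pow_cong:
  fixes a m :: int and r :: nat
  assumes "coprime a m" "\<And>d. [a ^ d = 1] (mod m) \<Longrightarrow> r dvd d"
    and "[a ^ i = a ^ j] (mod m)"
  shows "int r dvd int i - int j"
proof -
  have "int r dvd int j - int i" if "[a ^ i = a ^ j] (mod m)" "i \<le> j" for i j
    using assms(2)[OF pow_diff_cong_one[OF assms(1) that]] that(2)
    by (simp add: of_nat_diff flip: int_dvd_int_iff)
  from this[of i j] this[of j i] assms(3) show ?thesis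
    by (metis cong_sym dvd_diff_commute nat_le_linear)
qed

lemma euler_theorem_prime_power:
  fixes a :: int
  assumes "prime p" "coprime a (int p)" "n \<ge> 1"
  shows "[a ^ (p ^ (n - 1) * (p - 1)) = 1] (mod (int p ^ n))"
proof -
  have "residues (int p ^ n)"
    using assms prime_gt_1_nat by unfold_locales simp
  moreover have "coprime a (int p ^ n)" using assms(2) by simp
  ultimately have "[a ^ totient (nat (int p ^ n)) = 1] (mod (int p ^ n))"
    by (rule residues.euler_theorem)
  then show ?thesis using assms by (simp add: nat_power_eq totient_prime_power)
qed

lemma prime_power_dvd_if_pow_cong_one:
  fixes a :: int
  assumes p: "prime p" and "coprime a (int p)" "n \<ge> 1"
    and d: "[a ^ d = 1] (mod (int p ^ n))"
    and not_M: "\<not> [a ^ (p ^ (k - 1) * (p - 1)) = 1] (mod (int p ^ n))"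
  shows "p ^ k dvd d"
proof (rule ccontr)
  assume not_dvd: "\<not> p ^ k dvd d"
  define g where "g = gcd d (p ^ (n - 1) * (p - 1))"
  have g: "[a ^ g = 1] (mod (int p ^ n))"
    unfolding g_def by (rule pow_gcd_cong_one[OF d euler_theorem_prime_power[OF assms(1-3)]])
  obtain j where j: "gcd d (p ^ (n - 1)) = p ^ j"
    using divides_primepow_nat[OF p, of "gcd d (p ^ (n - 1))" "n - 1"] by auto
  have "j < k"
    using not_dvd j by (metis gcd_dvd1 not_less power_le_dvd)
  have "g dvd gcd (d * (p - 1)) (p ^ (n - 1) * (p - 1))"
    unfolding g_def by (intro gcd_greatest) (auto intro: dvd_mult2)
  also have "\<dots> = p ^ j * (p - 1)"
    using j by (metis gcd_mult_distrib_nat mult.commute)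
  also have "\<dots> dvd p ^ (k - 1) * (p - 1)"
    using \<open>j < k\<close> by (intro mult_dvd_mono) (auto intro: le_imp_power_dvd)
  finally obtain q where "p ^ (k - 1) * (p - 1) = g * q" by blast
  then have "[a ^ (p ^ (k - 1) * (p - 1)) = 1] (mod (int p ^ n))"
    using cong_pow[OF g, of q] by (simp add: power_mult)
  with not_M show False by contradiction
qed

lemma exists_prime_power_not_dvd:
  fixes c :: int
  assumes "c \<noteq> 0" "p \<ge> 2"
  shows "\<exists>n\<ge>1. \<not> int p ^ n dvd c"
proof -
  define n where "n = nat \<bar>c\<bar> + 1"
  have "int n < 2 ^ n"
    using less_exp[of n] by (simp flip: of_nat_less_iff)
  also have "(2::int) ^ n \<le> int p ^ n"
    using assms(2) by (intro power_mono) auto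
  finally have "\<bar>c\<bar> < \<bar>int p ^ n\<bar>" by (simp add: n_def)
  then have "\<not> int p ^ n dvd c"
    using dvd_imp_le_int[OF assms(1)] by (meson not_le)
  then show ?thesis by (auto simp: n_def)
qed

lemma exists_prime_power_modulus_order_dvd:
  fixes a :: int
  assumes p: "prime p" and "coprime a (int p)" "a \<noteq> 1" "a \<noteq> -1"
  shows "\<exists>n\<ge>1. \<forall>d. [a ^ d = 1] (mod (int p ^ n)) \<longrightarrow> p ^ k dvd d"
proof -
  define M where "M = p ^ (k - 1) * (p - 1)"
  have "p \<ge> 2" using p prime_ge_2_nat by blast
  then have "M > 0" by (simp add: M_def)
  have "\<bar>a\<bar> \<ge> 2" using assms \<open>p \<ge> 2\<close> by (cases "a = 0") auto
  then have "\<bar>a\<bar> ^ 1 \<le> \<bar>a ^ M\<bar>"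
    using \<open>M > 0\<close> by (simp only: power_abs, intro power_increasing) auto
  with \<open>\<bar>a\<bar> \<ge> 2\<close> have "a ^ M - 1 \<noteq> 0" by auto
  then obtain n where n: "n \<ge> 1" "\<not> [a ^ M = 1] (mod (int p ^ n))"
    using exists_prime_power_not_dvd[OF _ \<open>p \<ge> 2\<close>] by (metis cong_iff_dvd_diff)
  then show ?thesis
    using prime_power_dvd_if_pow_cong_one[OF p assms(2)] unfolding M_def by blast
qed

lemma min_exp_works:
  assumes "\<exists>x. 0 < x \<and> [a ^ x = b] (mod (int p ^ n))"
  shows "0 < min_exp a b p n \<and> [a ^ min_exp a b p n = b] (mod (int p ^ n))"
  unfolding min_exp_def using LeastI_ex[OF assms] .

lemma min_exp_le:
  assumes "0 < x" "[a ^ x = b] (mod (int p ^ n))"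
  shows "min_exp a b p n \<le> x"
  unfolding min_exp_def using assms by (intro Least_le) auto

lemma pow_min_exp_cong:
  assumes "\<forall>n\<ge>1. \<exists>x. 0 < x \<and> [a ^ x = b] (mod (int p ^ n))" "1 \<le> n" "n \<le> m"
  shows "[a ^ min_exp a b p m = a ^ min_exp a b p n] (mod (int p ^ n))"
proof -
  have "[a ^ min_exp a b p m = b] (mod (int p ^ m))"
    using assms min_exp_works by auto
  then have "[a ^ min_exp a b p m = b] (mod (int p ^ n))"
    using assms(3) by (meson cong_dvd_modulus le_imp_power_dvd)
  moreover have "[a ^ min_exp a b p n = b] (mod (int p ^ n))"
    using assms(1,2) min_exp_works by blast
  ultimately show ?thesis by (meson cong_sym cong_trans)
qed

lemma min_exp_minus_one_le_2:
  assumes "0 < x" "[(-1) ^ x = b] (mod (int p ^ n))"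
  shows "min_exp (-1) b p n \<le> 2"
proof (cases "even x")
  case True
  then have "[(-1) ^ 2 = b] (mod (int p ^ n))" using assms(2) by simp
  then show ?thesis by (rule min_exp_le[rotated]) auto
next
  case False
  then have "[(-1) ^ 1 = b] (mod (int p ^ n))" using assms(2) by simp
  then have "min_exp (-1) b p n \<le> 1" by (rule min_exp_le[rotated]) auto
  then show ?thesis by simp
qed

lemma min_exp_minus_one_eventually_const:
  assumes "p \<ge> 2" and ex: "\<forall>n\<ge>1. \<exists>x. 0 < x \<and> [(-1) ^ x = b] (mod (int p ^ n))"
    and "2 \<le> n"
  shows "min_exp (-1) b p n = min_exp (-1) b p 2"
proof (rule ccontr)
  let ?x = "min_exp (-1) b p"
  assume ne: "?x n \<noteq> ?x 2"
  have one_or_two: "?x m = 1 \<or> ?x m = 2" if m: "1 \<le> m" for m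
  proof -
    obtain y where "0 < y" "[(-1) ^ y = b] (mod (int p ^ m))" using ex m by blast
    then have "?x m \<le> 2" by (rule min_exp_minus_one_le_2)
    moreover have "0 < ?x m" using min_exp_works[of "-1" b p m] ex m by blast
    ultimately show ?thesis by linarith
  qed
  have "[(-1) ^ ?x n = (-1) ^ ?x 2] (mod (int p ^ 2))"
    using pow_min_exp_cong[OF ex _ \<open>2 \<le> n\<close>] by simp
  then have "int p ^ 2 dvd (-1) ^ ?x n - (-1) ^ ?x 2"
    by (simp add: cong_iff_dvd_diff)
  moreover have "\<bar>(-1) ^ ?x n - (-1) ^ ?x 2\<bar> = (2::int)"
    using one_or_two[of n] one_or_two[of 2] \<open>2 \<le> n\<close> ne by auto
  ultimately have "\<bar>int p ^ 2\<bar> \<le> 2"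
    using dvd_imp_le_int[of "(-1) ^ ?x n - (-1) ^ ?x 2" "int p ^ 2"] by auto
  moreover have "(2::int) ^ 2 \<le> int p ^ 2"
    using power_mono[of "2::int" "int p" 2] assms(1) by simp
  ultimately show False by simp
qed

lemma padic_convergent_if_eventually_const:
  assumes "\<forall>n\<ge>N. x n = c"
  shows "padic_convergent p x"
  unfolding padic_convergent_def using assms by (metis diff_self dvd_0_right)

theorem mainTheorem1:
  fixes p :: nat and a b :: int
  assumes "prime p"
    and "coprime a (int p)" and "coprime b (int p)"
    and "a \<noteq> 1"
    and "\<forall>n\<ge>1. \<exists>x::nat. 0 < x \<and> [a ^ x = b] (mod (int p ^ n))"
  shows "padic_convergent p (\<lambda>n. int (min_exp a b p n))"
proof (cases "a = -1")
  case True
  have "p \<ge> 2" using assms(1) prime_ge_2_nat by blast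
  then obtain c where "\<forall>n\<ge>2. min_exp a b p n = c"
    using min_exp_minus_one_eventually_const assms(5) unfolding True by blast
  then have "\<forall>n\<ge>2. int (min_exp a b p n) = int c" by simp
  then show ?thesis by (rule padic_convergent_if_eventually_const)
next
  case False
  show ?thesis unfolding padic_convergent_def
  proof
    fix k
    obtain N where N: "N \<ge> 1" "\<And>d. [a ^ d = 1] (mod (int p ^ N)) \<Longrightarrow> p ^ k dvd d"
      using exists_prime_power_modulus_order_dvd[OF assms(1,2,4) False] by blast
    have "int p ^ k dvd int (min_exp a b p m) - int (min_exp a b p n)"
      if "N \<le> m" "N \<le> n" for m n
    proof -
      have cop: "coprime a (int p ^ N)" using assms(2) by simp
      have "[a ^ min_exp a b p m = a ^ min_exp a b p n] (mod (int p ^ N))"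
        using pow_min_exp_cong[OF assms(5) N(1)] that by (meson cong_sym cong_trans)
      from dvd_exp_diff_if_pow_cong[OF cop N(2) this] show ?thesis by simp
    qed
    then show "\<exists>N. \<forall>m\<ge>N. \<forall>n\<ge>N. int p ^ k dvd int (min_exp a b p m) - int (min_exp a b p n)"
      by auto
  qed
qed

end
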